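(* Let $P$ be a finite poset and $t\geq 2$, $n\geq 2$ integers. Suppose $\mathcal{F}\subseteq[t]^n$ is induced $P$-saturated and there exist $i,i'$ with $1\leq i<i'\leq n$ such that $f(i)=f(i')$ for all $f\in\mathcal{F}$. Then $L_i(\mathcal{F})=\{L_i(f):f\in\mathcal{F}\}$ is an induced $P$-saturated family in $[t]^{n+1}$.
   Context: For positive integers $n,t$, $[n]=\{1,\dots,n\}$ and the hypergrid $[t]^n$ is the set of functions $f:[n]\to[t]$, partially ordered by $f\leq g$ iff $f(i)\leq g(i)$ for all $i\in[n]$. An induced copy of a poset $P$ in a family $\mathcal{F}\subseteq[t]^n$ is an injective map $\phi:P\to\mathcal{F}$ such that $\phi(x)\leq\phi(y)$ iff $x\leq_P y$. A family $\mathcal{F}\subseteq[t]^n$ is induced $P$-free if it contains no induced copy of $P$; it is induced $P$-saturated if it is induced $P$-free and for every $f\in[t]^n\setminus\mathcal{F}$ the family $\mathcal{F}\cup\{f\}$ contains an induced copy of $P$. For $f\in[t]^n$ and $i\in[n]$, $L_i(f)\in[t]^{n+1}$ is defined by $L_i(f)(x)=f(x)$ for $x\in[n]$ and $L_i(f)(n+1)=f(i)$. *)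

theory Defs
  imports Main
begin

text \<open>The hypergrid [t]^n: functions [n] -> [t], represented as functions nat => nat
  that take values in {1..t} on {1..n} and are 0 outside {1..n} (extensional).\<close>
definition hypergrid :: "nat \<Rightarrow> nat \<Rightarrow> (nat \<Rightarrow> nat) set" where
  "hypergrid t n = {f. (\<forall>x\<in>{1..n}. f x \<in> {1..t}) \<and> (\<forall>x. x \<notin> {1..n} \<longrightarrow> f x = 0)}"

definition grid_le :: "nat \<Rightarrow> (nat \<Rightarrow> nat) \<Rightarrow> (nat \<Rightarrow> nat) \<Rightarrow> bool" where
  "grid_le n f g \<longleftrightarrow> (\<forall>x\<in>{1..n}. f x \<le> g x)"

definition finite_poset :: "'a set \<Rightarrow> ('a \<Rightarrow> 'a \<Rightarrow> bool) \<Rightarrow> bool" where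
  "finite_poset P leP \<longleftrightarrow> finite P \<and>
     (\<forall>x\<in>P. leP x x) \<and>
     (\<forall>x\<in>P. \<forall>y\<in>P. leP x y \<and> leP y x \<longrightarrow> x = y) \<and>
     (\<forall>x\<in>P. \<forall>y\<in>P. \<forall>z\<in>P. leP x y \<and> leP y z \<longrightarrow> leP x z)"

definition induced_copy :: "'a set \<Rightarrow> ('a \<Rightarrow> 'a \<Rightarrow> bool) \<Rightarrow> nat \<Rightarrow> (nat \<Rightarrow> nat) set \<Rightarrow> ('a \<Rightarrow> (nat \<Rightarrow> nat)) \<Rightarrow> bool" where
  "induced_copy P leP n F phi \<longleftrightarrow> inj_on phi P \<and> phi ` P \<subseteq> F \<and>
     (\<forall>x\<in>P. \<forall>y\<in>P. grid_le n (phi x) (phi y) \<longleftrightarrow> leP x y)"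

definition induced_free :: "'a set \<Rightarrow> ('a \<Rightarrow> 'a \<Rightarrow> bool) \<Rightarrow> nat \<Rightarrow> (nat \<Rightarrow> nat) set \<Rightarrow> bool" where
  "induced_free P leP n F \<longleftrightarrow> \<not> (\<exists>phi. induced_copy P leP n F phi)"

definition induced_saturated :: "'a set \<Rightarrow> ('a \<Rightarrow> 'a \<Rightarrow> bool) \<Rightarrow> nat \<Rightarrow> nat \<Rightarrow> (nat \<Rightarrow> nat) set \<Rightarrow> bool" where
  "induced_saturated P leP t n F \<longleftrightarrow> F \<subseteq> hypergrid t n \<and> induced_free P leP n F \<and>
     (\<forall>f\<in>hypergrid t n - F. \<not> induced_free P leP n (insert f F))"

definition Lift :: "nat \<Rightarrow> nat \<Rightarrow> (nat \<Rightarrow> nat) \<Rightarrow> (nat \<Rightarrow> nat)" where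
  "Lift n i f = (\<lambda>x. if x \<in> {1..n} then f x else if x = n + 1 then f i else 0)"

end

theory Submission
  imports Defs
begin

text \<open>Lifting is an order embedding of [t]^n into [t]^(n+1), so L_i(F) inherits
  P-freeness from F. For saturation, a new g in [t]^(n+1) is collapsed to the h in [t]^n
  that agrees with g off {i, i'} and carries the maximum and the minimum of g(i), g(i'),
  g(n+1) at i and i' respectively. For every f with f(i) = f(i') we get
  g \<le> L_i(f) iff h \<le> f, and L_i(f) \<le> g iff f \<le> h; moreover h \<notin> F, since otherwise
  h(i) = h(i') forces g = L_i(h). So the induced copy of P in F \<union> {h} provided by the
  saturation of F is carried to L_i(F) \<union> {g} by sending h to g.\<close>

lemma induced_copy_image:
  assumes "induced_copy P leP n G phi" and "inj_on T G"
    and "\<And>a b. a \<in> G \<Longrightarrow> b \<in> G \<Longrightarrow> grid_le m (T a) (T b) \<longleftrightarrow> grid_le n a b"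
  shows "induced_copy P leP m (T ` G) (T \<circ> phi)"
  using assms unfolding induced_copy_def
  by (auto simp: inj_on_def image_subset_iff)

lemma induced_free_image_iff:
  assumes "inj_on T G"
    and "\<And>a b. a \<in> G \<Longrightarrow> b \<in> G \<Longrightarrow> grid_le m (T a) (T b) \<longleftrightarrow> grid_le n a b"
  shows "induced_free P leP m (T ` G) \<longleftrightarrow> induced_free P leP n G"
proof
  assume "induced_free P leP m (T ` G)"
  then show "induced_free P leP n G"
    using induced_copy_image[OF _ assms] unfolding induced_free_def by blast
next
  assume free: "induced_free P leP n G"
  let ?S = "the_inv_into G T"
  have "inj_on ?S (T ` G)"
    using assms(1) by (simp add: inj_on_the_inv_into)
  moreover have "grid_le n (?S a) (?S b) \<longleftrightarrow> grid_le m a b"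
    if "a \<in> T ` G" "b \<in> T ` G" for a b
    using that assms by (auto simp: the_inv_into_f_f)
  moreover have "?S ` T ` G = G"
    using assms(1) by (simp add: the_inv_into_onto)
  ultimately show "induced_free P leP m (T ` G)"
    using free induced_copy_image[of P leP m "T ` G" _ ?S n]
    unfolding induced_free_def by metis
qed

lemma Lift_in_hypergrid:
  assumes "f \<in> hypergrid t n" "1 \<le> i" "i \<le> n"
  shows "Lift n i f \<in> hypergrid t (n + 1)"
  using assms unfolding hypergrid_def Lift_def by auto

lemma inj_on_Lift: "inj_on (Lift n i) (hypergrid t n)"
proof (rule inj_onI)
  fix f g
  assume f: "f \<in> hypergrid t n" and g: "g \<in> hypergrid t n" and eq: "Lift n i f = Lift n i g"
  show "f = g"
  proof
    fix x
    show "f x = g x"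
      using fun_cong[OF eq, of x] f g by (auto simp: Lift_def hypergrid_def split: if_splits)
  qed
qed

lemma le_Lift_iff:
  "grid_le (n + 1) g (Lift n i f) \<longleftrightarrow> grid_le n g f \<and> g (n + 1) \<le> f i"
  unfolding grid_le_def Lift_def by (auto simp: atLeastAtMostSuc_conv simp flip: Suc_eq_plus1)

lemma Lift_le_iff:
  "grid_le (n + 1) (Lift n i f) g \<longleftrightarrow> grid_le n f g \<and> f i \<le> g (n + 1)"
  unfolding grid_le_def Lift_def by (auto simp: atLeastAtMostSuc_conv simp flip: Suc_eq_plus1)

lemma Lift_le_Lift_iff:
  assumes "1 \<le> i" "i \<le> n"
  shows "grid_le (n + 1) (Lift n i f) (Lift n i f') \<longleftrightarrow> grid_le n f f'"
  using assms by (simp add: le_Lift_iff) (auto simp: grid_le_def Lift_def)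

definition collapse :: "nat \<Rightarrow> nat \<Rightarrow> nat \<Rightarrow> (nat \<Rightarrow> nat) \<Rightarrow> (nat \<Rightarrow> nat)" where
  "collapse n i i' g = (\<lambda>k.
     if k = i then max (g i) (max (g i') (g (n + 1)))
     else if k = i' then min (g i) (min (g i') (g (n + 1)))
     else if k \<in> {1..n} then g k else 0)"

context
  fixes n i i' :: nat
  assumes idx: "1 \<le> i" "i \<le> n" "1 \<le> i'" "i' \<le> n" "i \<noteq> i'"
begin

lemma collapse_in_hypergrid:
  assumes "g \<in> hypergrid t (n + 1)"
  shows "collapse n i i' g \<in> hypergrid t n"
proof -
  have "g k \<in> {1..t}" if "k \<in> {1..n + 1}" for k
    using assms that unfolding hypergrid_def by blast
  then show ?thesis
    using idx unfolding hypergrid_def collapse_def by (auto simp: max_def min_def)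
qed

lemma Lift_collapse:
  assumes "g \<in> hypergrid t (n + 1)" and "collapse n i i' g i = collapse n i i' g i'"
  shows "Lift n i (collapse n i i' g) = g"
proof -
  have "g i = g i'" "g i' = g (n + 1)"
    using assms(2) idx unfolding collapse_def by (simp_all add: max_def min_def split: if_splits)
  then show ?thesis
    using assms(1) idx unfolding Lift_def collapse_def hypergrid_def by fastforce
qed

lemma collapse_le_iff:
  assumes "f i = f i'"
  shows "grid_le n (collapse n i i' g) f \<longleftrightarrow> grid_le n g f \<and> g (n + 1) \<le> f i"
proof -
  have "grid_le n (collapse n i i' g) f \<longleftrightarrow>
      (\<forall>k\<in>{1..n} - {i, i'}. g k \<le> f k) \<and> max (g i) (max (g i') (g (n + 1))) \<le> f i"
    using assms idx unfolding grid_le_def collapse_def by (auto split: if_splits)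
  moreover have "grid_le n g f \<longleftrightarrow>
      (\<forall>k\<in>{1..n} - {i, i'}. g k \<le> f k) \<and> g i \<le> f i \<and> g i' \<le> f i'"
    using idx unfolding grid_le_def by auto
  ultimately show ?thesis
    using assms by auto
qed

lemma le_collapse_iff:
  assumes "f i = f i'"
  shows "grid_le n f (collapse n i i' g) \<longleftrightarrow> grid_le n f g \<and> f i \<le> g (n + 1)"
proof -
  have "grid_le n f (collapse n i i' g) \<longleftrightarrow>
      (\<forall>k\<in>{1..n} - {i, i'}. f k \<le> g k) \<and> f i \<le> min (g i) (min (g i') (g (n + 1)))"
    using assms idx unfolding grid_le_def collapse_def by (auto split: if_splits)
  moreover have "grid_le n f g \<longleftrightarrow>
      (\<forall>k\<in>{1..n} - {i, i'}. f k \<le> g k) \<and> f i \<le> g i \<and> f i' \<le> g i'"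
    using idx unfolding grid_le_def by auto
  ultimately show ?thesis
    using assms by auto
qed

context
  fixes t :: nat and F :: "(nat \<Rightarrow> nat) set" and g :: "nat \<Rightarrow> nat"
  assumes F: "F \<subseteq> hypergrid t n" "\<forall>f\<in>F. f i = f i'"
    and g: "g \<in> hypergrid t (n + 1)" "g \<notin> Lift n i ` F"
begin

lemma collapse_notin:
  "collapse n i i' g \<notin> F"
  using F(2) g Lift_collapse by force

lemma induced_free_insert_Lift_iff:
  "induced_free P leP (n + 1) (insert g (Lift n i ` F)) \<longleftrightarrow>
   induced_free P leP n (insert (collapse n i i' g) F)"
proof -
  let ?h = "collapse n i i' g"
  let ?T = "(Lift n i)(?h := g)"
  have image: "?T ` insert ?h F = insert g (Lift n i ` F)"
    using collapse_notin by auto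
  have "inj_on (Lift n i) F"
    using inj_on_subset[OF inj_on_Lift F(1)] .
  then have "inj_on ?T F"
    using collapse_notin by (simp add: inj_on_def)
  then have inj: "inj_on ?T (insert ?h F)"
    using collapse_notin g(2) by auto
  have order: "grid_le (n + 1) (?T a) (?T b) \<longleftrightarrow> grid_le n a b"
    if "a \<in> insert ?h F" "b \<in> insert ?h F" for a b
  proof -
    from that consider "a = ?h" "b = ?h" | "a = ?h" "b \<in> F" | "a \<in> F" "b = ?h" | "a \<in> F" "b \<in> F"
      by blast
    then show ?thesis
    proof cases
      case 1
      then show ?thesis by (simp add: grid_le_def)
    next
      case 2
      then have Tb: "?T b = Lift n i b" and "b i = b i'"
        using collapse_notin F(2) by auto
      show ?thesis
        unfolding \<open>a = ?h\<close> fun_upd_same Tb le_Lift_iff collapse_le_iff[OF \<open>b i = b i'\<close>] ..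
    next
      case 3
      then have Ta: "?T a = Lift n i a" and "a i = a i'"
        using collapse_notin F(2) by auto
      show ?thesis
        unfolding \<open>b = ?h\<close> fun_upd_same Ta Lift_le_iff le_collapse_iff[OF \<open>a i = a i'\<close>] ..
    next
      case 4
      then have Ta: "?T a = Lift n i a" and Tb: "?T b = Lift n i b"
        using collapse_notin by auto
      show ?thesis
        unfolding Ta Tb Lift_le_Lift_iff[OF idx(1,2)] ..
    qed
  qed
  show ?thesis
    using induced_free_image_iff[OF inj order] unfolding image .
qed

end

end

theorem mainTheorem6:
  fixes P :: "'a set" and leP :: "'a \<Rightarrow> 'a \<Rightarrow> bool"
    and t n i i' :: nat and F :: "(nat \<Rightarrow> nat) set"
  assumes "finite_poset P leP"
    and "t \<ge> 2" and "n \<ge> 2"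
    and "induced_saturated P leP t n F"
    and "1 \<le> i" and "i < i'" and "i' \<le> n"
    and "\<forall>f\<in>F. f i = f i'"
  shows "induced_saturated P leP t (n + 1) (Lift n i ` F)"
proof -
  from assms(4) have F: "F \<subseteq> hypergrid t n" and free: "induced_free P leP n F"
    and sat: "\<forall>f\<in>hypergrid t n - F. \<not> induced_free P leP n (insert f F)"
    unfolding induced_saturated_def by auto
  have idx: "1 \<le> i" "i \<le> n" "1 \<le> i'" "i' \<le> n" "i \<noteq> i'"
    using assms(5-7) by auto
  have "Lift n i ` F \<subseteq> hypergrid t (n + 1)"
    using F idx Lift_in_hypergrid by blast
  moreover have "induced_free P leP (n + 1) (Lift n i ` F) \<longleftrightarrow> induced_free P leP n F"
    using inj_on_subset[OF inj_on_Lift F]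
    by (rule induced_free_image_iff) (rule Lift_le_Lift_iff[OF idx(1,2)])
  moreover have "\<not> induced_free P leP (n + 1) (insert g (Lift n i ` F))"
    if "g \<in> hypergrid t (n + 1) - Lift n i ` F" for g
  proof -
    have "collapse n i i' g \<in> hypergrid t n - F"
      using collapse_in_hypergrid[OF idx] collapse_notin[OF idx F assms(8)] that by blast
    then show ?thesis
      using sat induced_free_insert_Lift_iff[OF idx F assms(8)] that by blast
  qed
  ultimately show ?thesis
    using free unfolding induced_saturated_def by blast
qed

end
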